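(* Let $\alpha>-1$ and $\beta>0$. For every $\Phi\in\mathcal{C}^*_{\zeta}([0,\infty))$, $$\lim_{\eta\to\infty}\|\mathcal{R}_{\eta}^{(\alpha,\beta)}(\Phi;\cdot)-\Phi\|_{\zeta}=0.$$
   Context: The generalized Laguerre polynomials are $\mathcal{L}_k^{(\alpha)}(t)=\sum_{i=0}^{k}\frac{(-1)^i}{i!}\binom{k+\alpha}{k-i}t^i$. Put $p_{\eta,k}(x)=e^{-\eta x/2}2^{-\alpha-1}2^{-k}\mathcal{L}_k^{(\alpha)}(-\eta x/2)$ and, for $k\ge1$, $z>0$, $\mathcal{I}_{k,\eta}^{\beta}(z)=\frac{\eta\beta e^{-\eta\beta z}(\eta\beta z)^{k\beta-1}}{\Gamma(k\beta)}$. The operator is $\mathcal{R}_{\eta}^{(\alpha,\beta)}(\Phi;x)=p_{\eta,0}(x)\Phi(0)+\sum_{k=1}^{\infty}p_{\eta,k}(x)\int_0^\infty\mathcal{I}_{k,\eta}^{\beta}(z)\Phi(z)\,dz$, $\eta>0$. Let $\zeta(x)=1+x^2$. $\mathcal{B}_\zeta([0,\infty))$ is the space of $\Phi:[0,\infty)\to\mathbb{R}$ with $|\Phi(x)|\le M_\Phi\zeta(x)$ for some constant $M_\Phi$, normed by $\|\Phi\|_\zeta=\sup_{x\ge0}|\Phi(x)|/\zeta(x)$; $\mathcal{C}_\zeta([0,\infty))$ is the subspace of continuous functions in $\mathcal{B}_\zeta([0,\infty))$, and $\mathcal{C}^*_\zeta([0,\infty))$ is the set of $\Phi\in\mathcal{C}_\zeta([0,\infty))$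 for which $\lim_{x\to\infty}\Phi(x)/\zeta(x)$ exists and is finite. *)

theory Defs
  imports "HOL-Analysis.Analysis"
begin

definition laguerre :: "nat \<Rightarrow> real \<Rightarrow> real \<Rightarrow> real" where
  "laguerre k \<alpha> t = (\<Sum>i=0..k. (-1)^i / fact i * ((real k + \<alpha>) gchoose (k - i)) * t ^ i)"

definition pbasis :: "real \<Rightarrow> real \<Rightarrow> nat \<Rightarrow> real \<Rightarrow> real" where
  "pbasis \<alpha> \<eta> k x = exp (- \<eta> * x / 2) * 2 powr (- \<alpha> - 1) * 2 powr (- real k)
      * laguerre k \<alpha> (- \<eta> * x / 2)"

definition Ikernel :: "real \<Rightarrow> nat \<Rightarrow> real \<Rightarrow> real \<Rightarrow> real" where
  "Ikernel \<beta> k \<eta> z = \<eta> * \<beta> * exp (- \<eta> * \<beta> * z) * (\<eta> * \<beta> * z) powr (real k * \<beta> - 1)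
      / Gamma (real k * \<beta>)"

definition Rop :: "real \<Rightarrow> real \<Rightarrow> real \<Rightarrow> (real \<Rightarrow> real) \<Rightarrow> real \<Rightarrow> real" where
  "Rop \<alpha> \<beta> \<eta> \<Phi> x = pbasis \<alpha> \<eta> 0 x * \<Phi> 0
     + (\<Sum>k. pbasis \<alpha> \<eta> (Suc k) x * (LINT z:{0<..}|lborel. Ikernel \<beta> (Suc k) \<eta> z * \<Phi> z))"

definition zeta :: "real \<Rightarrow> real" where
  "zeta x = 1 + x^2"

definition B_zeta :: "(real \<Rightarrow> real) set" where
  "B_zeta = {\<Phi>. \<exists>M. \<forall>x\<ge>0. \<bar>\<Phi> x\<bar> \<le> M * zeta x}"

definition C_zeta :: "(real \<Rightarrow> real) set" where
  "C_zeta = {\<Phi>. \<Phi> \<in> B_zeta \<and> continuous_on {0..} \<Phi>}"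

definition C_zeta_star :: "(real \<Rightarrow> real) set" where
  "C_zeta_star = {\<Phi>. \<Phi> \<in> C_zeta \<and> (\<exists>L. ((\<lambda>x. \<Phi> x / zeta x) \<longlongrightarrow> L) at_top)}"

definition zeta_norm :: "(real \<Rightarrow> real) \<Rightarrow> real" where
  "zeta_norm \<Phi> = (SUP x\<in>{0..}. \<bar>\<Phi> x\<bar> / zeta x)"

end

theory Submission
  imports Defs
begin

text \<open>
  The operator is positive and linear. With \<open>s = \<eta>x/2\<close>, the weights \<open>pbasis \<alpha> \<eta> k x\<close> are the
  distribution of the sum of a Poisson(\<open>s\<close>) variable and an independent negative binomial
  variable with parameters \<open>\<alpha>+1\<close> and \<open>1/2\<close>, and \<open>Ikernel \<beta> k \<eta>\<close> is a Gamma density with mean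
  \<open>k/\<eta>\<close> and second moment \<open>(k\<^sup>2 + k/\<beta>)/\<eta>\<^sup>2\<close>. So the operator fixes constants and maps \<open>t\<close> and
  \<open>t\<^sup>2\<close> to \<open>x + O(1/\<eta>)\<close> and \<open>x\<^sup>2 + O((1+x)/\<eta>)\<close>. If \<open>\<Phi>/\<zeta> \<rightarrow> L\<close>, uniform continuity on a compact
  interval and the smallness of \<open>\<Phi> - L\<zeta>\<close> at infinity give, for every \<open>\<epsilon>\<close>, a majorant
  \<open>|\<Phi> t - \<Phi> x - c\<^sub>x (t - x)| \<le> 3\<epsilon> \<zeta> x + B (t - x)\<^sup>2\<close> with \<open>|c\<^sub>x| \<le> 2|L| \<zeta> x\<close>. Applying the
  operator to it yields \<open>|Rop \<alpha> \<beta> \<eta> \<Phi> x - \<Phi> x| \<le> 4\<epsilon> \<zeta> x\<close> for all large \<open>\<eta>\<close>, uniformly in \<open>x\<close>.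
\<close>

section \<open>Power series identities\<close>

lemma of_nat_Suc_times_divide_fact: "real (Suc n) * (c / fact (Suc n)) = c / fact n"
  by (simp add: fact_Suc del: of_nat_Suc)

lemma sums_from_Suc:
  fixes f :: "nat \<Rightarrow> real"
  assumes "g sums V" "\<And>n. f (Suc n) = g n" "f 0 = 0"
  shows "f sums V"
proof -
  have "(\<lambda>n. f (Suc n)) = g" using assms(2) by (rule ext)
  with assms(1) have "(\<lambda>n. f (Suc n)) sums V" by simp
  then show ?thesis using assms(3) by (simp add: sums_Suc_iff)
qed

lemma sums_congI: "f sums a \<Longrightarrow> (\<And>n. f n = g n) \<Longrightarrow> a = b \<Longrightarrow> g sums (b::real)"
  by (metis sums_cong)

lemma negbin_half_sums:
  fixes b :: real assumes "b > 0"
  shows "(\<lambda>j. pochhammer b j / fact j * (1/2)^j) sums (2 powr b)"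
proof -
  have "(\<lambda>n. ((-b) gchoose n) * (-1/2)^n) sums (1 + (-1/2)) powr (-b)"
    by (rule gen_binomial_real) simp
  moreover have "(1 + (-1/2::real)) powr (-b) = 2 powr b"
    by (simp add: powr_minus_divide powr_divide)
  moreover have "((-b) gchoose n) * (-1/2)^n = pochhammer b n / fact n * (1/2)^n" for n
  proof -
    have "((-b) gchoose n) = (-1)^n * pochhammer b n / fact n"
      by (simp add: gbinomial_pochhammer)
    moreover have "(-1/2::real)^n = (-1)^n * (1/2)^n"
      by (simp add: power_mult_distrib[symmetric])
    ultimately show ?thesis
      by (simp add: power_mult_distrib[symmetric])
  qed
  ultimately show ?thesis by simp
qed

lemma negbin_half_mean_sums:
  fixes b :: real assumes "b > 0"
  shows "(\<lambda>j. real j * (pochhammer b j / fact j * (1/2)^j)) sums (b * 2 powr b)"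
proof (rule sums_from_Suc)
  have "(\<lambda>n. b/2 * (pochhammer (b+1) n / fact n * (1/2)^n)) sums (b/2 * 2 powr (b+1))"
    using negbin_half_sums[of "b+1"] assms by (intro sums_mult) simp
  moreover have eq: "b/2 * 2 powr (b+1) = b * 2 powr b"
    by (simp add: powr_add)
  ultimately show "(\<lambda>n. b/2 * (pochhammer (b+1) n / fact n * (1/2)^n)) sums (b * 2 powr b)"
    by (simp only: eq)
  fix n
  have "real (Suc n) * (pochhammer b (Suc n) / fact (Suc n) * (1/2)^(Suc n))
     = (real (Suc n) * (pochhammer b (Suc n) / fact (Suc n))) * (1/2)^(Suc n)" by simp
  also have "\<dots> = pochhammer b (Suc n) / fact n * (1/2)^(Suc n)"
    by (simp only: of_nat_Suc_times_divide_fact)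
  finally show "real (Suc n) * (pochhammer b (Suc n) / fact (Suc n) * (1/2)^(Suc n))
      = b/2 * (pochhammer (b+1) n / fact n * (1/2)^n)"
    by (simp add: pochhammer_rec field_simps)
qed simp

lemma negbin_half_second_moment_sums:
  fixes b :: real assumes "b > 0"
  shows "(\<lambda>j. (real j)^2 * (pochhammer b j / fact j * (1/2)^j)) sums (b * (b+2) * 2 powr b)"
proof (rule sums_from_Suc)
  let ?P = "\<lambda>n. pochhammer (b+1) n / fact n * (1/2)^n"
  have "(\<lambda>n. b/2 * (real n * ?P n + ?P n)) sums (b/2 * ((b+1) * 2 powr (b+1) + 2 powr (b+1)))"
    using negbin_half_sums[of "b+1"] negbin_half_mean_sums[of "b+1"] assms
    by (intro sums_mult sums_add) simp_all
  moreover have eq: "b/2 * ((b+1) * 2 powr (b+1) + 2 powr (b+1)) = b * (b+2) * 2 powr b"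
    by (simp add: powr_add field_simps)
  ultimately show "(\<lambda>n. b/2 * (real n * ?P n + ?P n)) sums (b * (b+2) * 2 powr b)"
    by (simp only: eq)
  fix n
  have "(real (Suc n))^2 * (pochhammer b (Suc n) / fact (Suc n) * (1/2)^(Suc n))
     = real (Suc n) * (real (Suc n) * (pochhammer b (Suc n) / fact (Suc n))) * (1/2)^(Suc n)"
    by (simp add: power2_eq_square)
  also have "\<dots> = real (Suc n) * (pochhammer b (Suc n) / fact n) * (1/2)^(Suc n)"
    by (simp only: of_nat_Suc_times_divide_fact)
  finally show "(real (Suc n))^2 * (pochhammer b (Suc n) / fact (Suc n) * (1/2)^(Suc n))
      = b/2 * (real n * ?P n + ?P n)"
    by (simp add: pochhammer_rec field_simps)
qed simp

lemma exp_series_sums: "(\<lambda>i. s^i / fact i) sums exp (s::real)"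
  using exp_converges[of s] by (simp add: divide_inverse mult.commute)

lemma exp_series_mean_sums: "(\<lambda>i. real i * (s^i / fact i)) sums (s * exp (s::real))"
proof (rule sums_from_Suc)
  show "(\<lambda>n. s * (s^n / fact n)) sums (s * exp s)"
    by (intro sums_mult exp_series_sums)
  show "real (Suc n) * (s^Suc n / fact (Suc n)) = s * (s^n / fact n)" for n
    by (simp only: of_nat_Suc_times_divide_fact) simp
qed simp

lemma exp_series_second_moment_sums:
  "(\<lambda>i. (real i)^2 * (s^i / fact i)) sums ((s^2 + s) * exp (s::real))"
proof (rule sums_from_Suc)
  have "(\<lambda>n. s * (real n * (s^n / fact n) + s^n / fact n)) sums (s * (s * exp s + exp s))"
    by (intro sums_mult sums_add exp_series_sums exp_series_mean_sums)
  moreover have "s * (s * exp s + exp s) = (s^2 + s) * exp s"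
    by (simp add: algebra_simps power2_eq_square)
  ultimately show "(\<lambda>n. s * (real n * (s^n / fact n) + s^n / fact n)) sums ((s^2 + s) * exp s)"
    by simp
  fix n
  have "(real (Suc n))^2 * (s^Suc n / fact (Suc n))
      = real (Suc n) * (real (Suc n) * (s^Suc n / fact (Suc n)))"
    by (simp add: power2_eq_square)
  also have "\<dots> = real (Suc n) * (s^Suc n / fact n)"
    by (simp only: of_nat_Suc_times_divide_fact)
  finally show "(real (Suc n))^2 * (s^Suc n / fact (Suc n)) = s * (real n * (s^n / fact n) + s^n / fact n)"
    by (simp add: field_simps)
qed simp

lemma sums_diagonal_nonneg:
  fixes F :: "nat \<Rightarrow> nat \<Rightarrow> real"
  assumes nonneg: "\<And>i j. F i j \<ge> 0" and rows: "\<And>i. F i sums G i" and total: "G sums S"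
  shows "(\<lambda>k. \<Sum>i\<le>k. F i (k-i)) sums S"
proof -
  have G_nonneg: "G i \<ge> 0" for i
    using rows[of i] nonneg by (metis sums_le sums_zero)
  have rows': "((\<lambda>j. (\<lambda>(i,j). F i j) (i, j)) has_sum G i) UNIV" for i
    using sums_nonneg_imp_has_sum[OF rows[of i]] nonneg by simp
  have total': "(G has_sum S) UNIV"
    using sums_nonneg_imp_has_sum[OF total] G_nonneg by simp
  have "(\<lambda>(i,j). F i j) summable_on Sigma UNIV (\<lambda>_. UNIV)"
    by (rule summable_on_SigmaI[OF rows' has_sum_imp_summable[OF total']]) (simp add: nonneg)
  then have "((\<lambda>(i,j). F i j) has_sum S) (Sigma UNIV (\<lambda>_::nat. UNIV::nat set))"
    by (rule has_sum_SigmaI[OF rows' total'])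
  then have "((\<lambda>(k,i). F i (k-i)) has_sum S) (Sigma UNIV (\<lambda>k. {..k}))"
    by (subst has_sum_reindex_bij_witness[where i="\<lambda>(i,j). (i+j, i)" and j="\<lambda>(k,i). (i, k-i)"
          and T="Sigma UNIV (\<lambda>_::nat. UNIV::nat set)" and h="\<lambda>(i,j). F i j" and s'=S]) auto
  then have "((\<lambda>k. \<Sum>i\<le>k. F i (k-i)) has_sum S) UNIV"
    by (rule has_sum_SigmaD) auto
  then show ?thesis by (rule has_sum_imp_sums)
qed

section \<open>Moments of the Laguerre weights\<close>

text \<open>The \<open>(i, j)\<close> term of the Cauchy product of the Poisson series in \<open>s\<close> with the negative
  binomial series of parameter \<open>i + r\<close>, weighted by \<open>(i + j)\<^sup>m\<close> for the \<open>m\<close>-th moment.\<close>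

definition laguerre_term :: "real \<Rightarrow> real \<Rightarrow> nat \<Rightarrow> nat \<Rightarrow> nat \<Rightarrow> real" where
  "laguerre_term r s m i j =
     s^i / fact i * (pochhammer (real i + r) j / fact j * (1/2)^j) * (1/2)^i * (real (i+j))^m"

lemma laguerre_term_nonneg: "r > 0 \<Longrightarrow> s \<ge> 0 \<Longrightarrow> laguerre_term r s m i j \<ge> 0"
  unfolding laguerre_term_def by (intro mult_nonneg_nonneg divide_nonneg_pos pochhammer_nonneg) auto

lemma laguerre_term_diag_moment:
  "(\<Sum>i\<le>k. laguerre_term r s m i (k-i)) = (real k)^m * (\<Sum>i\<le>k. laguerre_term r s 0 i (k-i))"
  unfolding sum_distrib_left by (intro sum.cong refl) (simp add: laguerre_term_def)

lemma half_power_times_two_powr: "(1/2::real)^i * 2 powr (real i + r) = 2 powr r"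
  by (simp add: powr_add powr_realpow power_divide)

context
  fixes r s :: real
  assumes r: "r > 0" and s: "s \<ge> 0"
begin

lemma laguerre_term_diag_sums:
  "(\<lambda>k. \<Sum>i\<le>k. laguerre_term r s 0 i (k-i)) sums (2 powr r * exp s)"
proof (rule sums_diagonal_nonneg)
  show "laguerre_term r s 0 i j \<ge> 0" for i j
    using r s by (rule laguerre_term_nonneg)
  show "laguerre_term r s 0 i sums (s^i / fact i * 2 powr r)" for i
  proof -
    have "(\<lambda>j. s^i / fact i * (1/2)^i * (pochhammer (real i + r) j / fact j * (1/2)^j))
       sums (s^i / fact i * (1/2)^i * 2 powr (real i + r))"
      using r by (intro sums_mult negbin_half_sums) simp
    then show ?thesis
      by (rule sums_congI) (simp_all add: laguerre_term_def half_power_times_two_powr)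
  qed
  show "(\<lambda>i. s^i / fact i * 2 powr r) sums (2 powr r * exp s)"
    using sums_mult2[OF exp_series_sums[of s], of "2 powr r"] by (simp add: mult_ac)
qed

lemma laguerre_term_diag_mean_sums:
  "(\<lambda>k. \<Sum>i\<le>k. laguerre_term r s 1 i (k-i)) sums (2 powr r * exp s * (2 * s + r))"
proof (rule sums_diagonal_nonneg)
  show "laguerre_term r s 1 i j \<ge> 0" for i j
    using r s by (rule laguerre_term_nonneg)
  show "laguerre_term r s 1 i sums (s^i / fact i * 2 powr r * (2 * real i + r))" for i
  proof -
    let ?P = "\<lambda>j. pochhammer (real i + r) j / fact j * (1/2)^j"
    have "(\<lambda>j. s^i / fact i * (1/2)^i * (real j * ?P j + real i * ?P j))
       sums (s^i / fact i * (1/2)^i * ((real i + r) * 2 powr (real i + r) + real i * 2 powr (real i + r)))"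
      using r by (intro sums_mult sums_add negbin_half_sums negbin_half_mean_sums) simp_all
    then show ?thesis
    proof (rule sums_congI)
      show "s^i / fact i * (1/2)^i * (real j * ?P j + real i * ?P j) = laguerre_term r s 1 i j" for j
        by (simp add: laguerre_term_def algebra_simps add_divide_distrib)
      show "s^i / fact i * (1/2)^i * ((real i + r) * 2 powr (real i + r) + real i * 2 powr (real i + r))
          = s^i / fact i * 2 powr r * (2 * real i + r)"
        using half_power_times_two_powr[of i r] by (simp add: algebra_simps add_divide_distrib)
    qed
  qed
  have "(\<lambda>i. 2 powr r * (2 * (real i * (s^i / fact i)) + r * (s^i / fact i)))
      sums (2 powr r * (2 * (s * exp s) + r * exp s))"
    by (intro sums_mult sums_add exp_series_sums exp_series_mean_sums)
  then show "(\<lambda>i. s^i / fact i * 2 powr r * (2 * real i + r)) sums (2 powr r * exp s * (2 * s + r))"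
    by (rule sums_congI) (simp_all add: algebra_simps add_divide_distrib)
qed

lemma laguerre_term_diag_second_moment_sums:
  "(\<lambda>k. \<Sum>i\<le>k. laguerre_term r s 2 i (k-i))
     sums (2 powr r * exp s * (4 * s^2 + (4*r+6) * s + r^2 + 2*r))"
proof (rule sums_diagonal_nonneg)
  show "laguerre_term r s 2 i j \<ge> 0" for i j
    using r s by (rule laguerre_term_nonneg)
  show "laguerre_term r s 2 i sums
      (s^i / fact i * 2 powr r * (4 * (real i)^2 + (4*r+2) * real i + r^2 + 2*r))" for i
  proof -
    let ?P = "\<lambda>j. pochhammer (real i + r) j / fact j * (1/2)^j"
    let ?b = "real i + r"
    have "(\<lambda>j. s^i / fact i * (1/2)^i
              * ((real j)^2 * ?P j + 2 * real i * (real j * ?P j) + (real i)^2 * ?P j))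
       sums (s^i / fact i * (1/2)^i
              * (?b * (?b+2) * 2 powr ?b + 2 * real i * (?b * 2 powr ?b) + (real i)^2 * 2 powr ?b))"
      using r by (intro sums_mult sums_add negbin_half_sums negbin_half_mean_sums
          negbin_half_second_moment_sums) simp_all
    then show ?thesis
    proof (rule sums_congI)
      show "s^i / fact i * (1/2)^i * ((real j)^2 * ?P j + 2 * real i * (real j * ?P j) + (real i)^2 * ?P j)
          = laguerre_term r s 2 i j" for j
        by (simp add: laguerre_term_def algebra_simps power2_eq_square add_divide_distrib)
      have "s^i / fact i * (1/2)^i
              * (?b * (?b+2) * 2 powr ?b + 2 * real i * (?b * 2 powr ?b) + (real i)^2 * 2 powr ?b)
         = s^i / fact i * ((1/2)^i * 2 powr ?b) * (?b * (?b+2) + 2 * real i * ?b + (real i)^2)"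
        by (simp add: algebra_simps add_divide_distrib)
      also have "\<dots> = s^i / fact i * 2 powr r * (4 * (real i)^2 + (4*r+2) * real i + r^2 + 2*r)"
        by (simp only: half_power_times_two_powr) (simp add: algebra_simps power2_eq_square)
      finally show "s^i / fact i * (1/2)^i
              * (?b * (?b+2) * 2 powr ?b + 2 * real i * (?b * 2 powr ?b) + (real i)^2 * 2 powr ?b)
         = s^i / fact i * 2 powr r * (4 * (real i)^2 + (4*r+2) * real i + r^2 + 2*r)" .
    qed
  qed
  have "(\<lambda>i. 2 powr r * (4 * ((real i)^2 * (s^i / fact i)) + (4*r+2) * (real i * (s^i / fact i))
                         + (r^2 + 2*r) * (s^i / fact i)))
     sums (2 powr r * (4 * ((s^2 + s) * exp s) + (4*r+2) * (s * exp s) + (r^2 + 2*r) * exp s))"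
    by (intro sums_mult sums_add exp_series_sums exp_series_mean_sums exp_series_second_moment_sums)
  then show "(\<lambda>i. s^i / fact i * 2 powr r * (4 * (real i)^2 + (4*r+2) * real i + r^2 + 2*r))
      sums (2 powr r * exp s * (4 * s^2 + (4*r+6) * s + r^2 + 2*r))"
    by (rule sums_congI) (simp_all add: algebra_simps)
qed

end

lemma laguerre_times_two_powr_eq_diag_sum:
  "2 powr (- real k) * laguerre k \<alpha> (- s) = (\<Sum>i\<le>k. laguerre_term (\<alpha>+1) s 0 i (k-i))"
proof -
  have "2 powr (- real k) * ((-1)^i / fact i * ((real k + \<alpha>) gchoose (k - i)) * (-s)^i)
       = laguerre_term (\<alpha>+1) s 0 i (k-i)" if i: "i \<le> k" for i
  proof -
    have shift: "real k + \<alpha> - real (k-i) + 1 = real i + (\<alpha>+1)"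
      using i by (simp add: of_nat_diff)
    have gchoose: "(real k + \<alpha>) gchoose (k - i) = pochhammer (real i + (\<alpha>+1)) (k-i) / fact (k-i)"
      by (subst gbinomial_pochhammer') (simp only: shift)
    have sign: "(-1::real)^i * (-s)^i = s^i" by (simp add: power_mult_distrib[symmetric])
    have "2 powr (- real k) = (1/2::real)^(k-i) * (1/2)^i"
      using i by (simp add: powr_minus powr_realpow power_one_over inverse_eq_divide
          power_add[symmetric])
    then show ?thesis
      unfolding laguerre_term_def gchoose by (simp add: sign[symmetric] mult_ac)
  qed
  then show ?thesis
    unfolding laguerre_def sum_distrib_left atLeast0AtMost by (intro sum.cong) simp_all
qed

context
  fixes \<alpha> \<eta> x :: real
  assumes \<alpha>: "\<alpha> > -1" and \<eta>: "\<eta> > 0" and x: "x \<ge> 0"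
begin

lemma pbasis_eq_diag_sum:
  "pbasis \<alpha> \<eta> k x = exp (-(\<eta>*x/2)) * 2 powr (-(\<alpha>+1)) * (\<Sum>i\<le>k. laguerre_term (\<alpha>+1) (\<eta>*x/2) 0 i (k-i))"
  unfolding pbasis_def laguerre_times_two_powr_eq_diag_sum[symmetric] by (simp add: mult_ac)

lemma pbasis_nonneg: "pbasis \<alpha> \<eta> k x \<ge> 0"
  unfolding pbasis_eq_diag_sum using \<alpha> \<eta> x
  by (intro mult_nonneg_nonneg sum_nonneg laguerre_term_nonneg) auto

lemma pbasis_moment_sumsI:
  assumes "(\<lambda>k. \<Sum>i\<le>k. laguerre_term (\<alpha>+1) (\<eta>*x/2) m i (k-i)) sums (2 powr (\<alpha>+1) * exp (\<eta>*x/2) * P)"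
  shows "(\<lambda>k. pbasis \<alpha> \<eta> k x * (real k)^m) sums P"
proof -
  have "(\<lambda>k. exp (-(\<eta>*x/2)) * 2 powr (-(\<alpha>+1)) * (\<Sum>i\<le>k. laguerre_term (\<alpha>+1) (\<eta>*x/2) m i (k-i)))
     sums (exp (-(\<eta>*x/2)) * 2 powr (-(\<alpha>+1)) * (2 powr (\<alpha>+1) * exp (\<eta>*x/2) * P))"
    by (intro sums_mult assms)
  then show ?thesis
  proof (rule sums_congI)
    show "exp (-(\<eta>*x/2)) * 2 powr (-(\<alpha>+1)) * (\<Sum>i\<le>k. laguerre_term (\<alpha>+1) (\<eta>*x/2) m i (k-i))
        = pbasis \<alpha> \<eta> k x * (real k)^m" for k
      unfolding pbasis_eq_diag_sum by (subst laguerre_term_diag_moment) simp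
    have "exp (-(\<eta>*x/2)) * 2 powr (-(\<alpha>+1)) * (2 powr (\<alpha>+1) * exp (\<eta>*x/2) * P)
        = (exp (-(\<eta>*x/2)) * exp (\<eta>*x/2)) * (2 powr (-(\<alpha>+1)) * 2 powr (\<alpha>+1)) * P"
      by (simp only: mult_ac)
    then show "exp (-(\<eta>*x/2)) * 2 powr (-(\<alpha>+1)) * (2 powr (\<alpha>+1) * exp (\<eta>*x/2) * P) = P"
      by (simp flip: exp_add powr_add)
  qed
qed

lemma pbasis_sums: "(\<lambda>k. pbasis \<alpha> \<eta> k x) sums 1"
  using pbasis_moment_sumsI[of 0 1] laguerre_term_diag_sums[of "\<alpha>+1" "\<eta>*x/2"] \<alpha> \<eta> x by simp

lemma pbasis_mean_sums: "(\<lambda>k. pbasis \<alpha> \<eta> k x * real k) sums (\<eta>*x + (\<alpha>+1))"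
  using pbasis_moment_sumsI[of 1 "\<eta>*x + (\<alpha>+1)"] laguerre_term_diag_mean_sums[of "\<alpha>+1" "\<eta>*x/2"] \<alpha> \<eta> x
  by simp

lemma pbasis_second_moment_sums:
  "(\<lambda>k. pbasis \<alpha> \<eta> k x * (real k)^2) sums
     ((\<eta>*x)^2 + (2*(\<alpha>+1)+3) * (\<eta>*x) + (\<alpha>+1)^2 + 2*(\<alpha>+1))"
proof (rule pbasis_moment_sumsI)
  have "4 * (\<eta>*x/2)^2 + (4*(\<alpha>+1)+6) * (\<eta>*x/2) + (\<alpha>+1)^2 + 2*(\<alpha>+1)
     = (\<eta>*x)^2 + (2*(\<alpha>+1)+3) * (\<eta>*x) + (\<alpha>+1)^2 + 2*(\<alpha>+1)"
    by (simp add: power2_eq_square algebra_simps)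
  then show "(\<lambda>k. \<Sum>i\<le>k. laguerre_term (\<alpha>+1) (\<eta>*x/2) 2 i (k-i)) sums (2 powr (\<alpha>+1) * exp (\<eta>*x/2) *
      ((\<eta>*x)^2 + (2*(\<alpha>+1)+3) * (\<eta>*x) + (\<alpha>+1)^2 + 2*(\<alpha>+1)))"
    using laguerre_term_diag_second_moment_sums[of "\<alpha>+1" "\<eta>*x/2"] \<alpha> \<eta> x by simp
qed

end

section \<open>Moments of the Gamma kernel\<close>

lemma Gamma_plus1_real: "(x::real) > 0 \<Longrightarrow> Gamma (x+1) = x * Gamma x"
  by (rule Gamma_plus1) (auto dest: nonpos_Ints_nonpos)

lemma has_bochner_integral_Gamma:
  fixes a :: real assumes a: "a > 0"
  shows "has_bochner_integral lborel (\<lambda>t. indicator {0<..} t * (t powr (a-1) * exp (-t))) (Gamma a)"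
proof -
  let ?f = "\<lambda>t. indicator {0<..} t * (t powr (a-1) * exp (-t))"
  have "integral\<^sup>N lborel (\<lambda>t. ennreal (t powr (a-1) / exp t) * indicator {0..} t) = ennreal (Gamma a)"
    by (rule nn_integral_has_integral_lebesgue'[OF _ Gamma_integral_real[OF a]]) simp
  moreover have "ennreal (t powr (a-1) / exp t) * indicator {0..} t = ennreal (?f t)" for t
    by (cases "t > 0"; cases "t = 0") (auto simp: indicator_def exp_minus field_simps)
  ultimately have nn: "integral\<^sup>N lborel (\<lambda>t. ennreal (?f t)) = ennreal (Gamma a)"
    by simp
  have meas: "?f \<in> borel_measurable lborel"
    by measurable
  have pos: "AE t in lborel. 0 \<le> ?f t"
    by (auto simp: indicator_def)
  have "integrable lborel ?f"
    by (rule integrableI_nn_integral_finite[OF meas pos nn])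
  moreover have "integral\<^sup>L lborel ?f = Gamma a"
    using integral_eq_nn_integral[OF meas pos] nn Gamma_real_pos[OF a] by simp
  ultimately show ?thesis by (simp add: has_bochner_integral_iff)
qed

lemma Ikernel_moment:
  fixes \<beta> \<eta> :: real and k m :: nat
  assumes \<beta>: "\<beta> > 0" and \<eta>: "\<eta> > 0" and k: "k > 0"
  shows "has_bochner_integral lborel (\<lambda>z. indicator {0<..} z * (Ikernel \<beta> k \<eta> z * z^m))
           (Gamma (real k * \<beta> + real m) / ((\<eta>*\<beta>)^m * Gamma (real k * \<beta>)))"
proof -
  define a where "a = real k * \<beta>"
  define c where "c = \<eta> * \<beta>"
  have a: "a > 0" using \<beta> k by (simp add: a_def)
  have c: "c > 0" using \<beta> \<eta> by (simp add: c_def)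
  let ?g = "\<lambda>t. indicator {0<..} t * (t powr (a + real m - 1) * exp (-t))"
  have "has_bochner_integral lborel ?g (Gamma (a + real m))"
    using has_bochner_integral_Gamma[of "a + real m"] a by simp
  then have "has_bochner_integral lborel (\<lambda>z. ?g (0 + c*z)) (Gamma (a + real m) /\<^sub>R \<bar>c\<bar>)"
    using lborel_has_bochner_integral_real_affine_iff[where c=c and t=0, THEN iffD1] c by blast
  then have "has_bochner_integral lborel (\<lambda>z. c / (c^m * Gamma a) * ?g (0 + c*z))
     (c / (c^m * Gamma a) * (Gamma (a + real m) /\<^sub>R \<bar>c\<bar>))"
    by (rule has_bochner_integral_mult_right)
  moreover have "c / (c^m * Gamma a) * (Gamma (a + real m) /\<^sub>R \<bar>c\<bar>)
      = Gamma (real k * \<beta> + real m) / ((\<eta>*\<beta>)^m * Gamma (real k * \<beta>))"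
    using \<beta> \<eta> c Gamma_real_pos[OF a] by (simp add: a_def c_def field_simps)
  moreover have "c / (c^m * Gamma a) * ?g (0 + c*z) = indicator {0<..} z * (Ikernel \<beta> k \<eta> z * z^m)"
    for z :: real
  proof (cases "z > 0")
    case True
    have cz: "c * z > 0" using c True by simp
    have "(c*z) powr (a + real m - 1) = (c*z) powr ((a - 1) + real m)" by (simp add: algebra_simps)
    also have "\<dots> = (c*z) powr (a - 1) * (c^m * z^m)"
      using cz by (simp add: powr_add powr_realpow power_mult_distrib)
    finally show ?thesis using True c cz Gamma_real_pos[OF a]
      by (simp add: Ikernel_def a_def c_def indicator_def field_simps)
  next
    case False
    then have "\<not> c * z > 0" using c by (simp add: zero_less_mult_iff)
    then show ?thesis using False by (simp add: indicator_def)
  qed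
  ultimately show ?thesis by simp
qed

context
  fixes \<beta> \<eta> :: real
  assumes \<beta>: "\<beta> > 0" and \<eta>: "\<eta> > 0"
begin

lemma Ikernel_integral:
  assumes k: "k > 0"
  shows "has_bochner_integral lborel (\<lambda>z. indicator {0<..} z * Ikernel \<beta> k \<eta> z) 1"
proof -
  have "Gamma (real k * \<beta>) > 0" using \<beta> k by simp
  then show ?thesis using Ikernel_moment[OF \<beta> \<eta> k, of 0] by simp
qed

lemma Ikernel_mean:
  assumes k: "k > 0"
  shows "has_bochner_integral lborel (\<lambda>z. indicator {0<..} z * (Ikernel \<beta> k \<eta> z * z)) (real k / \<eta>)"
proof -
  have kb: "real k * \<beta> > 0" using \<beta> k by simp
  have "Gamma (real k * \<beta> + real 1) / ((\<eta>*\<beta>)^1 * Gamma (real k * \<beta>)) = real k / \<eta>"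
    using Gamma_plus1_real[OF kb] Gamma_real_pos[OF kb] \<beta> \<eta> by (simp add: field_simps)
  then show ?thesis using Ikernel_moment[OF \<beta> \<eta> k, of 1] by simp
qed

lemma Ikernel_second_moment:
  assumes k: "k > 0"
  shows "has_bochner_integral lborel (\<lambda>z. indicator {0<..} z * (Ikernel \<beta> k \<eta> z * z^2))
           (((real k)^2 + real k / \<beta>) / \<eta>^2)"
proof -
  have kb: "real k * \<beta> > 0" using \<beta> k by simp
  have "Gamma (real k * \<beta> + real 2) = Gamma ((real k * \<beta> + 1) + 1)"
    by (simp add: algebra_simps)
  also have "\<dots> = (real k * \<beta> + 1) * Gamma (real k * \<beta> + 1)"
    using kb by (intro Gamma_plus1_real) simp
  also have "Gamma (real k * \<beta> + 1) = real k * \<beta> * Gamma (real k * \<beta>)"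
    using kb by (rule Gamma_plus1_real)
  finally have "Gamma (real k * \<beta> + real 2) / ((\<eta>*\<beta>)^2 * Gamma (real k * \<beta>))
      = ((real k)^2 + real k / \<beta>) / \<eta>^2"
    using Gamma_real_pos[OF kb] \<beta> \<eta> by (simp add: field_simps power2_eq_square)
  then show ?thesis using Ikernel_moment[OF \<beta> \<eta> k, of 2] by simp
qed

lemma Ikernel_nonneg: "z > 0 \<Longrightarrow> Ikernel \<beta> k \<eta> z \<ge> 0"
  unfolding Ikernel_def using \<beta> \<eta>
  by (cases "k = 0") (auto intro!: divide_nonneg_nonneg mult_nonneg_nonneg Gamma_real_nonneg)

lemma continuous_on_Ikernel:
  assumes "k > 0"
  shows "continuous_on {0<..} (Ikernel \<beta> k \<eta>)"
proof -
  have "Gamma (real k * \<beta>) > 0" using \<beta> assms by simp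
  then show ?thesis unfolding Ikernel_def using \<beta> \<eta> by (intro continuous_intros) auto
qed

end

section \<open>The operator as a positive functional on \<open>C_zeta\<close>\<close>

lemma zeta_pos: "zeta t > 0"
  by (simp add: zeta_def add_pos_nonneg)

lemma zeta_lower_bounds: "1 \<le> zeta t" "t \<le> zeta t" "t^2 \<le> zeta t"
proof -
  have "0 \<le> (t - 1/2)^2" by simp
  then have "t \<le> 1 + t^2" by (simp add: power2_eq_square algebra_simps)
  then show "1 \<le> zeta t" "t \<le> zeta t" "t^2 \<le> zeta t" by (simp_all add: zeta_def)
qed

lemma zeta_le_shift: "zeta t \<le> 2 * zeta x + 2 * (t - x)^2"
proof -
  have "t^2 \<le> 2 * x^2 + 2 * (t-x)^2"
    using sum_squares_ge_zero[of "t - 2*x" 0] by (simp add: power2_eq_square algebra_simps)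
  then show ?thesis by (simp add: zeta_def)
qed

lemma C_zetaE:
  assumes "g \<in> C_zeta"
  obtains M where "\<And>t. t \<ge> 0 \<Longrightarrow> \<bar>g t\<bar> \<le> M * zeta t" "continuous_on {0..} g"
  using assms that unfolding C_zeta_def B_zeta_def by auto

lemma C_zeta_quadratic_combination:
  assumes "\<Phi> \<in> C_zeta"
  shows "(\<lambda>t. u * \<Phi> t + c0 + c1 * t + c2 * t^2) \<in> C_zeta"
proof -
  obtain M where M: "\<And>t. t \<ge> 0 \<Longrightarrow> \<bar>\<Phi> t\<bar> \<le> M * zeta t" and cont: "continuous_on {0..} \<Phi>"
    using C_zetaE[OF assms] by blast
  have "\<bar>u * \<Phi> t + c0 + c1 * t + c2 * t^2\<bar> \<le> (\<bar>u\<bar> * M + \<bar>c0\<bar> + \<bar>c1\<bar> + \<bar>c2\<bar>) * zeta t"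
    if t: "t \<ge> 0" for t
  proof -
    note z = zeta_lower_bounds[of t]
    have "\<bar>u * \<Phi> t\<bar> \<le> \<bar>u\<bar> * (M * zeta t)"
      unfolding abs_mult by (intro mult_left_mono M t) simp
    moreover have "\<bar>c0\<bar> \<le> \<bar>c0\<bar> * zeta t"
      using z(1) by (simp add: mult_le_cancel_left1)
    moreover have "\<bar>c1 * t\<bar> \<le> \<bar>c1\<bar> * zeta t"
      unfolding abs_mult using z(2) t by (intro mult_left_mono) auto
    moreover have "\<bar>c2 * t^2\<bar> \<le> \<bar>c2\<bar> * zeta t"
      unfolding abs_mult using z(3) by (intro mult_left_mono) auto
    ultimately have "\<bar>u * \<Phi> t + c0 + c1 * t + c2 * t^2\<bar>
        \<le> \<bar>u\<bar> * (M * zeta t) + \<bar>c0\<bar> * zeta t + \<bar>c1\<bar> * zeta t + \<bar>c2\<bar> * zeta t"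
      by linarith
    then show ?thesis by (simp add: algebra_simps)
  qed
  moreover have "continuous_on {0..} (\<lambda>t. u * \<Phi> t + c0 + c1 * t + c2 * t^2)"
    by (intro continuous_intros cont)
  ultimately show ?thesis unfolding C_zeta_def B_zeta_def by blast
qed

text \<open>The \<open>k = 0\<close> case is the point evaluation \<open>\<Phi> 0\<close> of the operator's first term.\<close>

definition kernel_avg :: "real \<Rightarrow> real \<Rightarrow> nat \<Rightarrow> (real \<Rightarrow> real) \<Rightarrow> real" where
  "kernel_avg \<beta> \<eta> k g = (if k = 0 then g 0 else LINT z:{0<..}|lborel. Ikernel \<beta> k \<eta> z * g z)"

lemma kernel_avg_eq_integral:
  "k > 0 \<Longrightarrow> kernel_avg \<beta> \<eta> k g = integral\<^sup>L lborel (\<lambda>z. indicator {0<..} z * (Ikernel \<beta> k \<eta> z * g z))"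
  by (simp add: kernel_avg_def set_lebesgue_integral_def)

context
  fixes \<beta> \<eta> :: real
  assumes \<beta>: "\<beta> > 0" and \<eta>: "\<eta> > 0"
begin

lemma integrable_Ikernel_mult:
  assumes k: "k > 0" and g: "g \<in> C_zeta"
  shows "integrable lborel (\<lambda>z. indicator {0<..} z * (Ikernel \<beta> k \<eta> z * g z))"
proof -
  obtain M where M: "\<And>t. t \<ge> 0 \<Longrightarrow> \<bar>g t\<bar> \<le> M * zeta t" and cont: "continuous_on {0..} g"
    using C_zetaE[OF g] by blast
  let ?I = "\<lambda>z. indicator {0<..} z * Ikernel \<beta> k \<eta> z"
  let ?I2 = "\<lambda>z. indicator {0<..} z * (Ikernel \<beta> k \<eta> z * z^2)"
  have "has_bochner_integral lborel (\<lambda>z. M * ?I z + M * ?I2 z) (M * 1 + M * (((real k)^2 + real k / \<beta>) / \<eta>^2))"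
    using Ikernel_integral[OF \<beta> \<eta> k] Ikernel_second_moment[OF \<beta> \<eta> k]
    by (intro has_bochner_integral_add has_bochner_integral_mult_right)
  then have dominant: "integrable lborel (\<lambda>z. M * ?I z + M * ?I2 z)"
    by (rule integrable.intros)
  have "continuous_on {0<..} (\<lambda>z. Ikernel \<beta> k \<eta> z * g z)"
    by (intro continuous_intros continuous_on_Ikernel[OF \<beta> \<eta> k] continuous_on_subset[OF cont]) auto
  then have "(\<lambda>z. indicator {0<..} z *\<^sub>R (Ikernel \<beta> k \<eta> z * g z)) \<in> borel_measurable borel"
    by (intro borel_measurable_continuous_on_indicator) auto
  then have meas: "(\<lambda>z. indicator {0<..} z * (Ikernel \<beta> k \<eta> z * g z)) \<in> borel_measurable lborel"
    by simp
  show ?thesis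
  proof (rule Bochner_Integration.integrable_bound[OF dominant meas], rule AE_I2)
    fix z :: real
    show "norm (indicator {0<..} z * (Ikernel \<beta> k \<eta> z * g z)) \<le> norm (M * ?I z + M * ?I2 z)"
    proof (cases "z > 0")
      case True
      have I0: "Ikernel \<beta> k \<eta> z \<ge> 0" using Ikernel_nonneg[OF \<beta> \<eta> True] .
      have "\<bar>Ikernel \<beta> k \<eta> z * g z\<bar> = Ikernel \<beta> k \<eta> z * \<bar>g z\<bar>" using I0 by (simp add: abs_mult)
      also have "\<dots> \<le> Ikernel \<beta> k \<eta> z * (M * zeta z)" using M[of z] True I0 by (intro mult_left_mono) auto
      also have "\<dots> = M * Ikernel \<beta> k \<eta> z + M * (Ikernel \<beta> k \<eta> z * z^2)" by (simp add: zeta_def algebra_simps)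
      finally show ?thesis using True by (simp add: indicator_def)
    qed (simp add: indicator_def)
  qed
qed

lemma kernel_avg_quadratic_combination:
  assumes \<Phi>: "\<Phi> \<in> C_zeta"
  shows "kernel_avg \<beta> \<eta> k (\<lambda>t. u * \<Phi> t + c0 + c1 * t + c2 * t^2)
       = u * kernel_avg \<beta> \<eta> k \<Phi> + c0 + c1 * (real k / \<eta>) + c2 * (((real k)^2 + real k / \<beta>) / \<eta>^2)"
proof (cases "k = 0")
  case True then show ?thesis by (simp add: kernel_avg_def)
next
  case False
  then have k: "k > 0" by simp
  have hP: "has_bochner_integral lborel (\<lambda>z. indicator {0<..} z * (Ikernel \<beta> k \<eta> z * \<Phi> z))
      (kernel_avg \<beta> \<eta> k \<Phi>)"
    unfolding kernel_avg_eq_integral[OF k]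
    by (rule has_bochner_integral_integrable[OF integrable_Ikernel_mult[OF k \<Phi>]])
  have "has_bochner_integral lborel
     (\<lambda>z. u * (indicator {0<..} z * (Ikernel \<beta> k \<eta> z * \<Phi> z)) + c0 * (indicator {0<..} z * Ikernel \<beta> k \<eta> z)
        + c1 * (indicator {0<..} z * (Ikernel \<beta> k \<eta> z * z)) + c2 * (indicator {0<..} z * (Ikernel \<beta> k \<eta> z * z^2)))
     (u * kernel_avg \<beta> \<eta> k \<Phi> + c0 * 1 + c1 * (real k / \<eta>) + c2 * (((real k)^2 + real k / \<beta>) / \<eta>^2))"
    using hP Ikernel_integral[OF \<beta> \<eta> k] Ikernel_mean[OF \<beta> \<eta> k] Ikernel_second_moment[OF \<beta> \<eta> k]
    by (intro has_bochner_integral_add has_bochner_integral_mult_right)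
  then have "has_bochner_integral lborel
     (\<lambda>z. indicator {0<..} z * (Ikernel \<beta> k \<eta> z * (u * \<Phi> z + c0 + c1 * z + c2 * z^2)))
     (u * kernel_avg \<beta> \<eta> k \<Phi> + c0 * 1 + c1 * (real k / \<eta>) + c2 * (((real k)^2 + real k / \<beta>) / \<eta>^2))"
    by (rule has_bochner_integral_cong[THEN iffD1, rotated 3]) (simp_all add: algebra_simps)
  then show ?thesis
    unfolding kernel_avg_eq_integral[OF k] by (simp add: has_bochner_integral_integral_eq)
qed

lemma kernel_avg_mono:
  assumes g: "g \<in> C_zeta" and h: "h \<in> C_zeta" and le: "\<And>t. t \<ge> 0 \<Longrightarrow> g t \<le> h t"
  shows "kernel_avg \<beta> \<eta> k g \<le> kernel_avg \<beta> \<eta> k h"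
proof (cases "k = 0")
  case True then show ?thesis using le[of 0] by (simp add: kernel_avg_def)
next
  case False
  then have k: "k > 0" by simp
  show ?thesis unfolding kernel_avg_eq_integral[OF k]
  proof (rule integral_mono[OF integrable_Ikernel_mult[OF k g] integrable_Ikernel_mult[OF k h]])
    fix z :: real
    show "indicator {0<..} z * (Ikernel \<beta> k \<eta> z * g z) \<le> indicator {0<..} z * (Ikernel \<beta> k \<eta> z * h z)"
      using Ikernel_nonneg[OF \<beta> \<eta>, of z k] le[of z]
      by (cases "z > 0") (auto simp: indicator_def intro: mult_left_mono)
  qed
qed

lemma kernel_avg_abs_le:
  assumes \<Phi>: "\<Phi> \<in> C_zeta" and M: "\<And>t. t \<ge> 0 \<Longrightarrow> \<bar>\<Phi> t\<bar> \<le> M * zeta t"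
  shows "\<bar>kernel_avg \<beta> \<eta> k \<Phi>\<bar> \<le> M + M / (\<beta> * \<eta>^2) * real k + M / \<eta>^2 * (real k)^2"
proof -
  let ?hi = "\<lambda>t. 0 * \<Phi> t + M + 0 * t + M * t^2" and ?lo = "\<lambda>t. 0 * \<Phi> t + (-M) + 0 * t + (-M) * t^2"
  have C: "?hi \<in> C_zeta" "?lo \<in> C_zeta" using C_zeta_quadratic_combination[OF \<Phi>] by blast+
  have up: "kernel_avg \<beta> \<eta> k \<Phi> \<le> kernel_avg \<beta> \<eta> k ?hi"
    by (rule kernel_avg_mono[OF \<Phi> C(1)]) (use M in \<open>fastforce simp: zeta_def abs_le_iff algebra_simps\<close>)
  have lo: "kernel_avg \<beta> \<eta> k ?lo \<le> kernel_avg \<beta> \<eta> k \<Phi>"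
    by (rule kernel_avg_mono[OF C(2) \<Phi>]) (use M in \<open>fastforce simp: zeta_def abs_le_iff algebra_simps\<close>)
  have "M * (((real k)^2 + real k / \<beta>) / \<eta>^2) = M / (\<beta> * \<eta>^2) * real k + M / \<eta>^2 * (real k)^2"
    using \<beta> \<eta> by (simp add: field_simps)
  then show ?thesis
    using up lo unfolding kernel_avg_quadratic_combination[OF \<Phi>] by (simp add: abs_le_iff)
qed

end

definition Rseries :: "real \<Rightarrow> real \<Rightarrow> real \<Rightarrow> (real \<Rightarrow> real) \<Rightarrow> real \<Rightarrow> real" where
  "Rseries \<alpha> \<beta> \<eta> g x = (\<Sum>k. pbasis \<alpha> \<eta> k x * kernel_avg \<beta> \<eta> k g)"

context
  fixes \<alpha> \<beta> \<eta> x :: real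
  assumes \<alpha>: "\<alpha> > -1" and \<beta>: "\<beta> > 0" and \<eta>: "\<eta> > 0" and x: "x \<ge> 0"
begin

lemma Rseries_summable:
  assumes \<Phi>: "\<Phi> \<in> C_zeta"
  shows "summable (\<lambda>k. pbasis \<alpha> \<eta> k x * kernel_avg \<beta> \<eta> k \<Phi>)"
proof -
  obtain M where M: "\<And>t. t \<ge> 0 \<Longrightarrow> \<bar>\<Phi> t\<bar> \<le> M * zeta t"
    using C_zetaE[OF \<Phi>] by blast
  let ?p = "\<lambda>k. pbasis \<alpha> \<eta> k x"
  have "summable (\<lambda>k. M * ?p k + M / (\<beta> * \<eta>^2) * (?p k * real k) + M / \<eta>^2 * (?p k * (real k)^2))"
    using pbasis_sums[OF \<alpha> \<eta> x] pbasis_mean_sums[OF \<alpha> \<eta> x] pbasis_second_moment_sums[OF \<alpha> \<eta> x]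
    by (intro summable_add summable_mult sums_summable) (auto intro: sums_summable)
  then show ?thesis
  proof (rule summable_comparison_test[rotated], intro exI allI impI)
    fix k :: nat
    have "norm (?p k * kernel_avg \<beta> \<eta> k \<Phi>) = ?p k * \<bar>kernel_avg \<beta> \<eta> k \<Phi>\<bar>"
      using pbasis_nonneg[OF \<alpha> \<eta> x] by (simp add: abs_mult)
    also have "\<dots> \<le> ?p k * (M + M / (\<beta> * \<eta>^2) * real k + M / \<eta>^2 * (real k)^2)"
      by (intro mult_left_mono kernel_avg_abs_le[OF \<beta> \<eta> \<Phi> M] pbasis_nonneg[OF \<alpha> \<eta> x])
    finally show "norm (?p k * kernel_avg \<beta> \<eta> k \<Phi>)
        \<le> M * ?p k + M / (\<beta> * \<eta>^2) * (?p k * real k) + M / \<eta>^2 * (?p k * (real k)^2)"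
      by (simp add: algebra_simps)
  qed
qed

lemma Rseries_quadratic_combination:
  assumes \<Phi>: "\<Phi> \<in> C_zeta"
  shows "Rseries \<alpha> \<beta> \<eta> (\<lambda>t. u * \<Phi> t + c0 + c1 * t + c2 * t^2) x
   = u * Rseries \<alpha> \<beta> \<eta> \<Phi> x + c0 + (c1 / \<eta> + c2 / (\<beta> * \<eta>^2)) * (\<eta>*x + (\<alpha>+1))
     + c2 / \<eta>^2 * ((\<eta>*x)^2 + (2*(\<alpha>+1)+3) * (\<eta>*x) + (\<alpha>+1)^2 + 2*(\<alpha>+1))"
proof -
  let ?p = "\<lambda>k. pbasis \<alpha> \<eta> k x"
  have "(\<lambda>k. u * (?p k * kernel_avg \<beta> \<eta> k \<Phi>) + c0 * ?p k + (c1 / \<eta> + c2 / (\<beta> * \<eta>^2)) * (?p k * real k)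
     + c2 / \<eta>^2 * (?p k * (real k)^2)) sums
     (u * Rseries \<alpha> \<beta> \<eta> \<Phi> x + c0 * 1 + (c1 / \<eta> + c2 / (\<beta> * \<eta>^2)) * (\<eta>*x + (\<alpha>+1))
     + c2 / \<eta>^2 * ((\<eta>*x)^2 + (2*(\<alpha>+1)+3) * (\<eta>*x) + (\<alpha>+1)^2 + 2*(\<alpha>+1)))"
    unfolding Rseries_def
    by (intro sums_add sums_mult summable_sums Rseries_summable \<Phi> pbasis_sums[OF \<alpha> \<eta> x]
        pbasis_mean_sums[OF \<alpha> \<eta> x] pbasis_second_moment_sums[OF \<alpha> \<eta> x])
  moreover have "?p k * kernel_avg \<beta> \<eta> k (\<lambda>t. u * \<Phi> t + c0 + c1 * t + c2 * t^2)
     = u * (?p k * kernel_avg \<beta> \<eta> k \<Phi>) + c0 * ?p k + (c1 / \<eta> + c2 / (\<beta> * \<eta>^2)) * (?p k * real k)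
       + c2 / \<eta>^2 * (?p k * (real k)^2)" for k
    unfolding kernel_avg_quadratic_combination[OF \<beta> \<eta> \<Phi>] using \<beta> \<eta> by (simp add: field_simps)
  ultimately show ?thesis
    unfolding Rseries_def[of _ _ _ "\<lambda>t. u * \<Phi> t + c0 + c1 * t + c2 * t^2"] by (simp add: sums_iff)
qed

lemma Rseries_mono:
  assumes g: "g \<in> C_zeta" and h: "h \<in> C_zeta" and le: "\<And>t. t \<ge> 0 \<Longrightarrow> g t \<le> h t"
  shows "Rseries \<alpha> \<beta> \<eta> g x \<le> Rseries \<alpha> \<beta> \<eta> h x"
  unfolding Rseries_def
  by (intro suminf_le Rseries_summable g h mult_left_mono kernel_avg_mono[OF \<beta> \<eta> g h le]
      pbasis_nonneg[OF \<alpha> \<eta> x])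

lemma Rop_eq_Rseries:
  assumes "\<Phi> \<in> C_zeta"
  shows "Rop \<alpha> \<beta> \<eta> \<Phi> x = Rseries \<alpha> \<beta> \<eta> \<Phi> x"
proof -
  have "(\<Sum>k. pbasis \<alpha> \<eta> (Suc k) x * kernel_avg \<beta> \<eta> (Suc k) \<Phi>)
      = Rseries \<alpha> \<beta> \<eta> \<Phi> x - pbasis \<alpha> \<eta> 0 x * kernel_avg \<beta> \<eta> 0 \<Phi>"
    unfolding Rseries_def by (rule suminf_split_head[OF Rseries_summable[OF assms]])
  then show ?thesis unfolding Rop_def by (simp add: kernel_avg_def)
qed

text \<open>Korovkin's argument: positivity carries the quadratic majorant over to \<open>Rseries\<close>, and the
  linear term \<open>c (t - x)\<close> survives only through the bias \<open>(\<alpha>+1)/\<eta>\<close> of the first moment.\<close>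

lemma Rseries_error_bound:
  assumes \<Phi>: "\<Phi> \<in> C_zeta"
    and majorant: "\<And>t. t \<ge> 0 \<Longrightarrow> \<bar>\<Phi> t - \<Phi> x - c * (t - x)\<bar> \<le> A + B * (t - x)^2"
  shows "\<bar>Rseries \<alpha> \<beta> \<eta> \<Phi> x - \<Phi> x\<bar> \<le> \<bar>c\<bar> * ((\<alpha>+1) / \<eta>) + A
           + B * ((3 + 1/\<beta>) * x / \<eta> + ((\<alpha>+1)^2 + 2*(\<alpha>+1) + (\<alpha>+1)/\<beta>) / \<eta>^2)"
proof -
  let ?V = "A + B * ((3 + 1/\<beta>) * x / \<eta> + ((\<alpha>+1)^2 + 2*(\<alpha>+1) + (\<alpha>+1)/\<beta>) / \<eta>^2)"
  let ?g = "\<lambda>t. 1 * \<Phi> t + (c * x - \<Phi> x) + (-c) * t + 0 * t^2"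
  let ?hi = "\<lambda>t. 0 * \<Phi> t + (A + B * x^2) + (-2 * B * x) * t + B * t^2"
  let ?lo = "\<lambda>t. 0 * \<Phi> t + (-(A + B * x^2)) + (2 * B * x) * t + (-B) * t^2"
  have C: "?g \<in> C_zeta" "?hi \<in> C_zeta" "?lo \<in> C_zeta"
    using C_zeta_quadratic_combination[OF \<Phi>] by blast+
  have "Rseries \<alpha> \<beta> \<eta> ?g x = Rseries \<alpha> \<beta> \<eta> \<Phi> x - \<Phi> x - c * ((\<alpha>+1) / \<eta>)"
    unfolding Rseries_quadratic_combination[OF \<Phi>] using \<eta> by (simp add: field_simps)
  moreover have "Rseries \<alpha> \<beta> \<eta> ?hi x = ?V" "Rseries \<alpha> \<beta> \<eta> ?lo x = - ?V"
    unfolding Rseries_quadratic_combination[OF \<Phi>] using \<eta> \<beta> by (simp_all add: field_simps power2_eq_square)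
  moreover have "Rseries \<alpha> \<beta> \<eta> ?g x \<le> Rseries \<alpha> \<beta> \<eta> ?hi x"
    using C(1,2) by (rule Rseries_mono)
      (use majorant in \<open>fastforce simp: abs_le_iff algebra_simps power2_eq_square\<close>)
  moreover have "Rseries \<alpha> \<beta> \<eta> ?lo x \<le> Rseries \<alpha> \<beta> \<eta> ?g x"
    using C(3,1) by (rule Rseries_mono)
      (use majorant in \<open>fastforce simp: abs_le_iff algebra_simps power2_eq_square\<close>)
  moreover have "\<bar>c * ((\<alpha>+1) / \<eta>)\<bar> \<le> \<bar>c\<bar> * ((\<alpha>+1) / \<eta>)"
    using \<alpha> \<eta> by (simp add: abs_mult)
  ultimately show ?thesis unfolding abs_le_iff by (smt (verit))
qed

end

section \<open>Local quadratic majorants for \<open>C_zeta_star\<close>\<close>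

lemma deviation_from_zeta_le:
  fixes \<Phi> :: "real \<Rightarrow> real"
  assumes M: "\<And>t. t \<ge> 0 \<Longrightarrow> \<bar>\<Phi> t\<bar> \<le> M * zeta t"
    and tail: "\<And>t. t \<ge> A \<Longrightarrow> \<bar>\<Phi> t - L * zeta t\<bar> \<le> \<epsilon> * zeta t"
    and \<epsilon>: "0 \<le> \<epsilon>" "\<epsilon> \<le> 1" and A: "A \<ge> 1" and x: "x \<ge> 2 * A" and t: "t \<ge> 0"
  shows "\<bar>\<Phi> t - L * zeta t\<bar> \<le> 2 * \<epsilon> * zeta x + (2 * M + 2 * \<bar>L\<bar> + 2) * (t - x)^2"
proof (cases "t \<ge> A")
  case True
  have "\<bar>\<Phi> t - L * zeta t\<bar> \<le> \<epsilon> * (2 * zeta x + 2 * (t - x)^2)"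
    using tail[OF True] mult_left_mono[OF zeta_le_shift \<epsilon>(1)] by (rule order_trans)
  moreover have "\<epsilon> * (t - x)^2 \<le> (t - x)^2"
    using \<epsilon> by (simp add: mult_left_le_one_le)
  moreover have "0 \<le> (2 * M + 2 * \<bar>L\<bar>) * (t - x)^2"
    using M[of 0] by (simp add: zeta_def)
  ultimately show ?thesis by (simp add: algebra_simps)
next
  case False
  have "A^2 \<le> (t - x)^2"
    using False x A by (simp add: power2_commute[of t] power_mono)
  moreover have "zeta t \<le> 1 + A^2"
    using False t by (simp add: zeta_def power_mono)
  moreover have "1 \<le> A^2"
    using A by (simp add: one_le_power)
  ultimately have zeta_t: "zeta t \<le> 2 * (t - x)^2" by linarith
  have "\<bar>L * zeta t\<bar> = \<bar>L\<bar> * zeta t"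
    using zeta_pos[of t] by (simp add: abs_mult)
  then have "\<bar>\<Phi> t - L * zeta t\<bar> \<le> (M + \<bar>L\<bar>) * zeta t"
    using M[OF t] abs_triangle_ineq4[of "\<Phi> t" "L * zeta t"] by (simp add: distrib_right)
  also have "\<dots> \<le> (M + \<bar>L\<bar>) * (2 * (t - x)^2)"
    using zeta_t M[of 0] by (intro mult_left_mono) (auto simp: zeta_def)
  also have "\<dots> \<le> 2 * \<epsilon> * zeta x + (2 * M + 2 * \<bar>L\<bar> + 2) * (t - x)^2"
    using \<epsilon> zeta_pos[of x] by (simp add: algebra_simps)
  finally show ?thesis .
qed

lemma quadratic_majorant_far:
  fixes \<Phi> :: "real \<Rightarrow> real"
  assumes M: "\<And>t. t \<ge> 0 \<Longrightarrow> \<bar>\<Phi> t\<bar> \<le> M * zeta t"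
    and tail: "\<And>t. t \<ge> A \<Longrightarrow> \<bar>\<Phi> t - L * zeta t\<bar> \<le> \<epsilon> * zeta t"
    and \<epsilon>: "0 \<le> \<epsilon>" "\<epsilon> \<le> 1" and A: "A \<ge> 1" and x: "x \<ge> 2 * A" and t: "t \<ge> 0"
  shows "\<bar>\<Phi> t - \<Phi> x - 2 * L * x * (t - x)\<bar> \<le> 3 * \<epsilon> * zeta x + (3 * \<bar>L\<bar> + 2 * M + 2) * (t - x)^2"
proof -
  have "\<Phi> t - \<Phi> x - 2 * L * x * (t - x) = L * (t - x)^2 + (\<Phi> t - L * zeta t) - (\<Phi> x - L * zeta x)"
    by (simp add: zeta_def power2_eq_square algebra_simps)
  moreover have "\<bar>L * (t - x)^2\<bar> = \<bar>L\<bar> * (t - x)^2"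
    by (simp add: abs_mult)
  moreover have "\<bar>\<Phi> x - L * zeta x\<bar> \<le> \<epsilon> * zeta x"
    using tail x A by simp
  ultimately show ?thesis
    using deviation_from_zeta_le[OF assms] by (simp add: algebra_simps abs_le_iff) linarith
qed

lemma quadratic_majorant_near:
  fixes \<Phi> :: "real \<Rightarrow> real"
  assumes M: "\<And>t. t \<ge> 0 \<Longrightarrow> \<bar>\<Phi> t\<bar> \<le> M * zeta t"
    and ucont: "\<And>s t. s \<in> {0..R} \<Longrightarrow> t \<in> {0..R} \<Longrightarrow> \<bar>t - s\<bar> < d \<Longrightarrow> \<bar>\<Phi> t - \<Phi> s\<bar> < \<epsilon>"
    and d: "d > 0" and x: "x \<ge> 0" "x + d \<le> R" "zeta x \<le> Z" and t: "t \<ge> 0"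
  shows "\<bar>\<Phi> t - \<Phi> x\<bar> \<le> \<epsilon> + M * (3 * Z / d^2 + 2) * (t - x)^2"
proof -
  have M0: "M \<ge> 0" using M[of 0] by (simp add: zeta_def)
  show ?thesis
  proof (cases "\<bar>t - x\<bar> < d")
    case True
    then have "\<bar>\<Phi> t - \<Phi> x\<bar> < \<epsilon>" using x t by (intro ucont) auto
    moreover have "0 \<le> M * (3 * Z / d^2 + 2) * (t - x)^2"
      using M0 x(3) zeta_pos[of x] by simp
    ultimately show ?thesis by simp
  next
    case False
    then have "d^2 \<le> (t - x)^2" using d by (metis abs_le_square_iff not_less abs_of_pos)
    then have "Z \<le> Z / d^2 * (t - x)^2"
      using d x(3) zeta_pos[of x] by (simp add: field_simps)
    then have "zeta x \<le> Z / d^2 * (t - x)^2" using x(3) by linarith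
    moreover have "\<bar>\<Phi> t - \<Phi> x\<bar> \<le> M * (2 * zeta x + 2 * (t - x)^2) + M * zeta x"
      using M[OF t] M[OF x(1)] mult_left_mono[OF zeta_le_shift[of t x] M0] by linarith
    ultimately have "\<bar>\<Phi> t - \<Phi> x\<bar> \<le> 3 * M * (Z / d^2 * (t - x)^2) + 2 * M * (t - x)^2"
      using M0 mult_left_mono[of "zeta x" "Z / d^2 * (t - x)^2" "3 * M"] by (simp add: algebra_simps)
    moreover have "0 \<le> \<epsilon>"
      using ucont[of x x] x d by fastforce
    ultimately show ?thesis by (simp add: algebra_simps)
  qed
qed

lemma zeta_tail_deviation:
  fixes \<Phi> :: "real \<Rightarrow> real"
  assumes lim: "((\<lambda>x. \<Phi> x / zeta x) \<longlongrightarrow> L) at_top" and \<epsilon>: "\<epsilon> > 0"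
  obtains A where "A \<ge> 1" "\<And>t. t \<ge> A \<Longrightarrow> \<bar>\<Phi> t - L * zeta t\<bar> \<le> \<epsilon> * zeta t"
proof -
  obtain A0 where A0: "\<And>t. t \<ge> A0 \<Longrightarrow> \<bar>\<Phi> t / zeta t - L\<bar> < \<epsilon>"
    using tendstoD[OF lim \<epsilon>] by (auto simp: eventually_at_top_linorder dist_real_def)
  have "\<bar>\<Phi> t - L * zeta t\<bar> \<le> \<epsilon> * zeta t" if "t \<ge> max A0 1" for t
  proof -
    have "\<Phi> t / zeta t - L = (\<Phi> t - L * zeta t) / zeta t"
      using zeta_pos[of t] by (simp add: field_simps)
    then show ?thesis
      using A0[of t] that zeta_pos[of t] by (simp add: abs_divide pos_divide_less_eq)
  qed
  then show ?thesis using that[of "max A0 1"] by simp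
qed

lemma C_zeta_quadratic_majorant:
  fixes \<Phi> :: "real \<Rightarrow> real"
  assumes \<Phi>: "\<Phi> \<in> C_zeta" and lim: "((\<lambda>x. \<Phi> x / zeta x) \<longlongrightarrow> L) at_top"
    and \<epsilon>: "0 < \<epsilon>" "\<epsilon> \<le> 1"
  obtains B where "B \<ge> 0" and "\<And>x. x \<ge> 0 \<Longrightarrow> \<exists>c. \<bar>c\<bar> \<le> 2 * \<bar>L\<bar> * zeta x \<and>
            (\<forall>t\<ge>0. \<bar>\<Phi> t - \<Phi> x - c * (t - x)\<bar> \<le> 3 * \<epsilon> * zeta x + B * (t - x)^2)"
proof -
  obtain M where M: "\<And>t. t \<ge> 0 \<Longrightarrow> \<bar>\<Phi> t\<bar> \<le> M * zeta t" and cont: "continuous_on {0..} \<Phi>"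
    using C_zetaE[OF \<Phi>] by blast
  have M0: "M \<ge> 0" using M[of 0] by (simp add: zeta_def)
  obtain A where A: "A \<ge> 1" and tail: "\<And>t. t \<ge> A \<Longrightarrow> \<bar>\<Phi> t - L * zeta t\<bar> \<le> \<epsilon> * zeta t"
    using zeta_tail_deviation[OF lim \<epsilon>(1)] by blast
  have "uniformly_continuous_on {0..2*A+1} \<Phi>"
    by (rule compact_uniformly_continuous[OF continuous_on_subset[OF cont]]) auto
  then obtain \<delta> where \<delta>: "\<delta> > 0"
    and ucont: "\<And>s t. s \<in> {0..2*A+1} \<Longrightarrow> t \<in> {0..2*A+1} \<Longrightarrow> dist t s < \<delta> \<Longrightarrow> dist (\<Phi> t) (\<Phi> s) < \<epsilon>"
    unfolding uniformly_continuous_on_def using \<epsilon>(1) by metis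
  define d where "d = min \<delta> 1"
  have d: "d > 0" "d \<le> 1" "d \<le> \<delta>" using \<delta> by (auto simp: d_def)
  define B where "B = max (3 * \<bar>L\<bar> + 2 * M + 2) (M * (3 * (1 + 4 * A^2) / d^2 + 2))"
  show ?thesis
  proof
    show "B \<ge> 0" using M0 by (simp add: B_def le_max_iff_disj)
    fix x :: real assume x: "x \<ge> 0"
    show "\<exists>c. \<bar>c\<bar> \<le> 2 * \<bar>L\<bar> * zeta x \<and>
            (\<forall>t\<ge>0. \<bar>\<Phi> t - \<Phi> x - c * (t - x)\<bar> \<le> 3 * \<epsilon> * zeta x + B * (t - x)^2)"
    proof (cases "x \<ge> 2 * A")
      case True
      have "\<bar>2 * L * x\<bar> \<le> 2 * \<bar>L\<bar> * zeta x"
        using x zeta_lower_bounds(2)[of x] by (simp add: abs_mult mult_left_mono)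
      moreover have "\<bar>\<Phi> t - \<Phi> x - 2 * L * x * (t - x)\<bar> \<le> 3 * \<epsilon> * zeta x + B * (t - x)^2"
        if "t \<ge> 0" for t
        using quadratic_majorant_far[OF M tail _ \<epsilon>(2) A True that] \<epsilon>(1)
          mult_right_mono[of "3 * \<bar>L\<bar> + 2 * M + 2" B "(t - x)^2"] by (simp add: B_def)
      ultimately show ?thesis by blast
    next
      case False
      have zeta_x: "zeta x \<le> 1 + 4 * A^2"
        using False x power_mono[of x "2 * A" 2] by (simp add: zeta_def power_mult_distrib)
      have "\<bar>\<Phi> t - \<Phi> x - 0 * (t - x)\<bar> \<le> 3 * \<epsilon> * zeta x + B * (t - x)^2" if t: "t \<ge> 0" for t
      proof -
        have "\<bar>\<Phi> t - \<Phi> x\<bar> \<le> \<epsilon> + M * (3 * (1 + 4 * A^2) / d^2 + 2) * (t - x)^2"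
        proof (rule quadratic_majorant_near[OF M _ d(1) x _ zeta_x t])
          show "\<bar>\<Phi> t' - \<Phi> s\<bar> < \<epsilon>" if "s \<in> {0..2*A+1}" "t' \<in> {0..2*A+1}" "\<bar>t' - s\<bar> < d" for s t'
            using ucont[OF that(1,2)] that(3) d by (simp add: dist_real_def)
          show "x + d \<le> 2 * A + 1" using False d by simp
        qed
        moreover have "\<epsilon> \<le> 3 * \<epsilon> * zeta x"
          using \<epsilon> zeta_lower_bounds(1)[of x] by simp
        moreover have "M * (3 * (1 + 4 * A^2) / d^2 + 2) * (t - x)^2 \<le> B * (t - x)^2"
          by (intro mult_right_mono) (simp_all add: B_def)
        ultimately show ?thesis by simp
      qed
      then show ?thesis by (intro exI[of _ 0]) (simp add: zeta_pos less_imp_le)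
    qed
  qed
qed

section \<open>Uniform weighted convergence\<close>

lemma moment_error_le_zeta:
  fixes r \<beta> \<eta> B C c x :: real
  assumes "r > 0" "\<beta> > 0" "\<eta> \<ge> 1" "B \<ge> 0" and c: "\<bar>c\<bar> \<le> C * zeta x"
  shows "\<bar>c\<bar> * (r / \<eta>) + B * ((3 + 1/\<beta>) * x / \<eta> + (r^2 + 2*r + r/\<beta>) / \<eta>^2)
       \<le> (C * r + B * (3 + 1/\<beta>) + B * (r^2 + 2*r + r/\<beta>)) * zeta x / \<eta>"
proof -
  let ?Q = "r^2 + 2*r + r/\<beta>"
  have "\<bar>c\<bar> * (r / \<eta>) \<le> C * zeta x * (r / \<eta>)"
    using c assms by (intro mult_right_mono) auto
  moreover have "(3 + 1/\<beta>) * x / \<eta> \<le> (3 + 1/\<beta>) * zeta x / \<eta>"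
    using assms zeta_lower_bounds(2)[of x] by (intro divide_right_mono mult_left_mono) auto
  moreover have "?Q / \<eta>^2 \<le> ?Q * zeta x / \<eta>"
  proof -
    have Q: "0 \<le> ?Q" using assms by simp
    have "?Q / \<eta>^2 \<le> ?Q / \<eta>"
      using assms by (intro divide_left_mono) (auto simp: power2_eq_square)
    also have "\<dots> \<le> ?Q * zeta x / \<eta>"
      using assms mult_left_mono[OF zeta_lower_bounds(1)[of x] Q] by (intro divide_right_mono) auto
    finally show ?thesis .
  qed
  ultimately have "\<bar>c\<bar> * (r / \<eta>) + B * ((3 + 1/\<beta>) * x / \<eta> + ?Q / \<eta>^2)
      \<le> C * zeta x * (r / \<eta>) + B * ((3 + 1/\<beta>) * zeta x / \<eta> + ?Q * zeta x / \<eta>)"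
    using assms(4) by (intro add_mono mult_left_mono) auto
  also have "\<dots> = (C * r + B * (3 + 1/\<beta>) + B * ?Q) * zeta x / \<eta>"
    by (simp add: algebra_simps add_divide_distrib)
  finally show ?thesis .
qed

lemma Rop_error_le:
  fixes \<alpha> \<beta> \<epsilon> :: real
  assumes \<alpha>: "\<alpha> > -1" and \<beta>: "\<beta> > 0" and \<Phi>: "\<Phi> \<in> C_zeta_star" and \<epsilon>: "0 < \<epsilon>" "\<epsilon> \<le> 1"
  obtains N where "\<And>\<eta> x. \<eta> \<ge> N \<Longrightarrow> x \<ge> 0 \<Longrightarrow> \<bar>Rop \<alpha> \<beta> \<eta> \<Phi> x - \<Phi> x\<bar> \<le> 4 * \<epsilon> * zeta x"
proof -
  have \<Phi>C: "\<Phi> \<in> C_zeta" and "\<exists>L. ((\<lambda>x. \<Phi> x / zeta x) \<longlongrightarrow> L) at_top"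
    using \<Phi> unfolding C_zeta_star_def by auto
  then obtain L where lim: "((\<lambda>x. \<Phi> x / zeta x) \<longlongrightarrow> L) at_top" by blast
  obtain B where B: "B \<ge> 0" and majorant: "\<And>x. x \<ge> 0 \<Longrightarrow> \<exists>c. \<bar>c\<bar> \<le> 2 * \<bar>L\<bar> * zeta x \<and>
      (\<forall>t\<ge>0. \<bar>\<Phi> t - \<Phi> x - c * (t - x)\<bar> \<le> 3 * \<epsilon> * zeta x + B * (t - x)^2)"
    using C_zeta_quadratic_majorant[OF \<Phi>C lim \<epsilon>] by blast
  define r where "r = \<alpha> + 1"
  define K where "K = 2 * \<bar>L\<bar> * r + B * (3 + 1/\<beta>) + B * (r^2 + 2*r + r/\<beta>)"
  show ?thesis
  proof
    fix \<eta> x :: real assume \<eta>: "\<eta> \<ge> max 1 (K / \<epsilon>)" and x: "x \<ge> 0"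
    obtain c where c: "\<bar>c\<bar> \<le> 2 * \<bar>L\<bar> * zeta x"
      and hyp: "\<And>t. t \<ge> 0 \<Longrightarrow> \<bar>\<Phi> t - \<Phi> x - c * (t - x)\<bar> \<le> 3 * \<epsilon> * zeta x + B * (t - x)^2"
      using majorant[OF x] by blast
    have \<eta>1: "\<eta> \<ge> 1" using \<eta> by simp
    have r: "r > 0" using \<alpha> by (simp add: r_def)
    have "\<bar>Rop \<alpha> \<beta> \<eta> \<Phi> x - \<Phi> x\<bar> = \<bar>Rseries \<alpha> \<beta> \<eta> \<Phi> x - \<Phi> x\<bar>"
      using Rop_eq_Rseries[OF \<alpha> \<beta> _ x \<Phi>C] \<eta>1 by simp
    also have "\<dots> \<le> \<bar>c\<bar> * (r / \<eta>) + 3 * \<epsilon> * zeta x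
        + B * ((3 + 1/\<beta>) * x / \<eta> + (r^2 + 2*r + r/\<beta>) / \<eta>^2)"
      using Rseries_error_bound[OF \<alpha> \<beta> _ x \<Phi>C hyp] \<eta>1 unfolding r_def by simp
    also have "\<dots> \<le> 3 * \<epsilon> * zeta x + K * zeta x / \<eta>"
      using moment_error_le_zeta[OF r \<beta> \<eta>1 B c] unfolding K_def by linarith
    also have "K * zeta x / \<eta> \<le> \<epsilon> * zeta x"
      using \<eta> \<epsilon> zeta_pos[of x] by (simp add: field_simps)
    finally show "\<bar>Rop \<alpha> \<beta> \<eta> \<Phi> x - \<Phi> x\<bar> \<le> 4 * \<epsilon> * zeta x" by simp
  qed
qed

lemma zeta_norm_le:
  assumes "\<And>x. x \<ge> 0 \<Longrightarrow> \<bar>f x\<bar> \<le> C * zeta x"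
  shows "0 \<le> zeta_norm f" "zeta_norm f \<le> C"
proof -
  have le: "\<bar>f x\<bar> / zeta x \<le> C" if "x \<in> {0..}" for x
    using assms[of x] that zeta_pos[of x] by (simp add: pos_divide_le_eq)
  show "zeta_norm f \<le> C"
    unfolding zeta_norm_def by (rule cSUP_least) (use le in auto)
  have "bdd_above ((\<lambda>x. \<bar>f x\<bar> / zeta x) ` {0..})"
    using le by (intro bdd_aboveI2) auto
  then show "0 \<le> zeta_norm f"
    unfolding zeta_norm_def by (rule cSUP_upper2[of _ _ 0]) (auto simp: zeta_pos less_imp_le)
qed

theorem theorem7:
  fixes \<alpha> \<beta> :: real and \<Phi> :: "real \<Rightarrow> real"
  assumes "\<alpha> > -1" and "\<beta> > 0" and "\<Phi> \<in> C_zeta_star"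
  shows "(\<forall>\<^sub>F \<eta> in at_top. (\<lambda>x. Rop \<alpha> \<beta> \<eta> \<Phi> x - \<Phi> x) \<in> B_zeta)
       \<and> ((\<lambda>\<eta>. zeta_norm (\<lambda>x. Rop \<alpha> \<beta> \<eta> \<Phi> x - \<Phi> x)) \<longlongrightarrow> 0) at_top"
proof
  obtain N where "\<And>\<eta> x. \<eta> \<ge> N \<Longrightarrow> x \<ge> 0 \<Longrightarrow> \<bar>Rop \<alpha> \<beta> \<eta> \<Phi> x - \<Phi> x\<bar> \<le> 4 * 1 * zeta x"
    using Rop_error_le[OF assms, of 1] by auto
  then show "\<forall>\<^sub>F \<eta> in at_top. (\<lambda>x. Rop \<alpha> \<beta> \<eta> \<Phi> x - \<Phi> x) \<in> B_zeta"
    unfolding eventually_at_top_linorder B_zeta_def by fastforce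
next
  show "((\<lambda>\<eta>. zeta_norm (\<lambda>x. Rop \<alpha> \<beta> \<eta> \<Phi> x - \<Phi> x)) \<longlongrightarrow> 0) at_top"
  proof (rule tendstoI)
    fix e :: real assume "e > 0"
    then have \<epsilon>: "0 < min (e/8) 1" "min (e/8) 1 \<le> 1" "4 * min (e/8) 1 < e" by auto
    obtain N where "\<And>\<eta> x. \<eta> \<ge> N \<Longrightarrow> x \<ge> 0 \<Longrightarrow> \<bar>Rop \<alpha> \<beta> \<eta> \<Phi> x - \<Phi> x\<bar> \<le> 4 * min (e/8) 1 * zeta x"
      using Rop_error_le[OF assms \<epsilon>(1,2)] by auto
    then have "dist (zeta_norm (\<lambda>x. Rop \<alpha> \<beta> \<eta> \<Phi> x - \<Phi> x)) 0 < e" if "\<eta> \<ge> N" for \<eta>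
      using zeta_norm_le[of "\<lambda>x. Rop \<alpha> \<beta> \<eta> \<Phi> x - \<Phi> x"] that \<epsilon>(3) by (fastforce simp: dist_real_def)
    then show "\<forall>\<^sub>F \<eta> in at_top. dist (zeta_norm (\<lambda>x. Rop \<alpha> \<beta> \<eta> \<Phi> x - \<Phi> x)) 0 < e"
      unfolding eventually_at_top_linorder by blast
  qed
qed

end
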